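(* Let $U:\mathbb{R}^d\to\mathbb{R}$ satisfy: (A1) $U$ is continuously differentiable and $\|\nabla U(x)-\nabla U(y)\|_2\le L\|x-y\|_2$ for all $x,y$, for some $L>0$; (A2) $\nabla U(0)=0$; (A3) there exist $m,R>0$ such that for all $x,y\in\mathbb{R}^d$ with $\|x-y\|_2>R$, $\langle\nabla U(x)-\nabla U(y),x-y\rangle\ge m\|x-y\|_2^2$. Let $\kappa=L/m$, $c=1000$, and let $p^*$ be the probability measure on $\mathbb{R}^{2d}$ with density $p^*(x,u)\propto\exp\big(-U(x)-\frac{c\kappa L}{2}\|u\|_2^2\big)$. Then $$\mathbb{E}_{(x,u)\sim p^*}\big[\|x\|_2^2+\|x+u\|_2^2\big]\le36(R^2+d/m).$$ *)

theory Defs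
  imports "HOL-Analysis.Analysis"
begin

definition pstar_dens :: "('a::euclidean_space \<Rightarrow> real) \<Rightarrow> real \<Rightarrow> real \<Rightarrow> 'a \<times> 'a \<Rightarrow> real" where
  "pstar_dens U L m = (\<lambda>(x, u). exp (- U x - (1000 * (L / m) * L / 2) * (norm u)\<^sup>2))"

end

theory Submission
  imports Defs
begin

text \<open>The density factorises as exp (-U x) times the Gaussian factor exp (-a |u|^2) with a = 500 L^2/m,
  and |x + u|^2 \<le> 2 |x|^2 + 2 |u|^2 reduces the claim to second-moment bounds for the two factors.
  Both come from one scaling argument: if W grows by at least (5/8) M |x|^2 under x \<mapsto> 3x/2 outside
  the ball of radius \<rho>, where M \<rho>^2 \<ge> d + 2, then the substitution x = 3y/2 shows that the second
  moment of exp (-W) beyond 3\<rho>/2 is a fixed fraction of itself plus a multiple of its part on the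
  annulus \<rho> < |x| \<le> 3\<rho>/2, whence the whole second moment is at most (18/5) \<rho>^2 times the mass.
  For U the growth follows from dissipativity against the origin along rays, with
  \<rho>^2 = R^2 + (d + 2)/m; for the Gaussian \<rho>^2 = (d + 2)/(2a) is negligible because m \<le> L.\<close>

section \<open>Nonnegative integrals over Lebesgue measure\<close>

lemma nn_integral_continuous_on_bounded_finite:
  fixes h :: "'a::euclidean_space \<Rightarrow> real"
  assumes "continuous_on UNIV h" and "bounded S" and [measurable]: "S \<in> sets borel"
  shows "(\<integral>\<^sup>+x. ennreal (h x) * indicator S x \<partial>lborel) < \<infinity>"
proof -
  have "compact (h ` closure S)"
    using assms compact_closure compact_continuous_image continuous_on_subset by blast
  then obtain B where B: "\<And>x. x \<in> S \<Longrightarrow> h x \<le> B"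
    using compact_imp_bounded bounded_iff closure_subset
    by (metis abs_le_D1 image_eqI real_norm_def subsetD)
  have "(\<integral>\<^sup>+x. ennreal (h x) * indicator S x \<partial>lborel) \<le> (\<integral>\<^sup>+x. ennreal B * indicator S x \<partial>lborel)"
    using B by (intro nn_integral_mono) (auto simp: indicator_def intro!: ennreal_leI)
  also have "\<dots> = ennreal B * emeasure lborel S"
    by (simp add: nn_integral_cmult_indicator)
  also have "\<dots> < \<infinity>"
    using emeasure_bounded_finite[OF \<open>bounded S\<close>] by (simp add: ennreal_mult_less_top)
  finally show ?thesis .
qed

lemma nn_integral_lborel_pos:
  fixes f :: "'a::euclidean_space \<Rightarrow> real"
  assumes [measurable]: "f \<in> borel_measurable borel" and pos: "\<And>x. f x > 0"
  shows "0 < (\<integral>\<^sup>+x. ennreal (f x) \<partial>lborel)"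
proof (rule ccontr)
  assume "\<not> ?thesis"
  then have "AE x in lborel. ennreal (f x) = 0"
    by (simp add: nn_integral_0_iff_AE)
  then have "AE x in (lborel::'a measure). False"
    using pos by (auto elim!: AE_mp simp: less_le)
  then have "UNIV \<in> null_sets (lborel::'a measure)"
    by (simp add: AE_iff_null_sets)
  then show False by (simp add: null_sets_def)
qed

lemma nn_integral_lborel_scaleR:
  fixes f :: "'a::euclidean_space \<Rightarrow> ennreal"
  assumes [measurable]: "f \<in> borel_measurable borel" and "c \<noteq> 0"
  shows "(\<integral>\<^sup>+x. f x \<partial>lborel) = ennreal (\<bar>c\<bar> ^ DIM('a)) * (\<integral>\<^sup>+x. f (c *\<^sub>R x) \<partial>lborel)"
  by (subst lborel_affine[OF \<open>c \<noteq> 0\<close>, of 0])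
     (simp add: nn_integral_density nn_integral_distr nn_integral_cmult)

lemma nn_integral_lborel_pair_mult:
  fixes f :: "'a::euclidean_space \<Rightarrow> real" and g :: "'b::euclidean_space \<Rightarrow> real"
  assumes [measurable]: "f \<in> borel_measurable borel" "g \<in> borel_measurable borel"
    and "\<And>x. f x \<ge> 0" "\<And>u. g u \<ge> 0"
  shows "(\<integral>\<^sup>+z. ennreal (f (fst z) * g (snd z)) \<partial>lborel)
       = (\<integral>\<^sup>+x. ennreal (f x) \<partial>lborel) * (\<integral>\<^sup>+u. ennreal (g u) \<partial>lborel)"
proof -
  have "(\<integral>\<^sup>+z. ennreal (f (fst z) * g (snd z)) \<partial>lborel)
      = (\<integral>\<^sup>+x. \<integral>\<^sup>+u. ennreal (f x) * ennreal (g u) \<partial>lborel \<partial>lborel)"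
    using assms(3,4)
    by (simp add: lborel_prod[symmetric] lborel.nn_integral_fst[symmetric] ennreal_mult)
  also have "\<dots> = (\<integral>\<^sup>+x. ennreal (f x) * (\<integral>\<^sup>+u. ennreal (g u) \<partial>lborel) \<partial>lborel)"
    by (simp add: nn_integral_cmult)
  also have "\<dots> = (\<integral>\<^sup>+x. ennreal (f x) \<partial>lborel) * (\<integral>\<^sup>+u. ennreal (g u) \<partial>lborel)"
    by (simp add: nn_integral_multc)
  finally show ?thesis .
qed

lemma ennreal_le_absorb:
  fixes K A :: ennreal
  assumes "K < \<infinity>" "A < \<infinity>" "K \<le> ennreal q * A + ennreal q' * K"
    and "0 \<le> q" "0 \<le> q'" "q' < 1"
  shows "K \<le> ennreal (q / (1 - q')) * A"
proof -
  obtain k where k: "K = ennreal k" "0 \<le> k" using assms(1) by (cases K rule: ennreal_cases) auto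
  obtain a where a: "A = ennreal a" "0 \<le> a" using assms(2) by (cases A rule: ennreal_cases) auto
  have "ennreal k \<le> ennreal (q * a + q' * k)"
    using assms(3-5) k a by (simp add: ennreal_plus ennreal_mult)
  then have "k \<le> q * a + q' * k"
    by (subst (asm) ennreal_le_iff) (use assms(4,5) k a in auto)
  then have "k * (1 - q') \<le> q * a"
    by (simp add: algebra_simps)
  then have "k \<le> q / (1 - q') * a"
    using assms(6) by (simp add: pos_le_divide_eq mult.commute)
  then show ?thesis
    using assms(4-6) k a by (simp add: ennreal_mult[symmetric] ennreal_leI)
qed

section \<open>Second moments by scaling\<close>

definition annulus :: "real \<Rightarrow> real \<Rightarrow> 'a::real_normed_vector set" where
  "annulus a b = {x. a < norm x \<and> norm x \<le> b}"

lemma annulus_borel [measurable]: "annulus a b \<in> sets (borel :: 'a::euclidean_space measure)"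
  unfolding annulus_def by measurable

lemma bounded_annulus: "bounded (annulus a b)"
  unfolding annulus_def bounded_iff by auto

lemma nn_integral_mult_indicator_le:
  assumes [measurable]: "f \<in> borel_measurable M" "S \<in> sets M"
    and "\<And>x. f x \<ge> 0" "\<And>x. x \<in> S \<Longrightarrow> w x \<le> c"
  shows "(\<integral>\<^sup>+x. ennreal (w x * f x) * indicator S x \<partial>M)
       \<le> ennreal c * (\<integral>\<^sup>+x. ennreal (f x) * indicator S x \<partial>M)"
proof -
  have "(\<integral>\<^sup>+x. ennreal (w x * f x) * indicator S x \<partial>M)
      \<le> (\<integral>\<^sup>+x. ennreal c * (ennreal (f x) * indicator S x) \<partial>M)"
    using assms(3,4)
    by (intro nn_integral_mono) (auto simp: indicator_def ennreal_mult''[symmetric] mult_right_mono intro!: ennreal_leI)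
  also have "\<dots> = ennreal c * (\<integral>\<^sup>+x. ennreal (f x) * indicator S x \<partial>M)"
    by (simp add: nn_integral_cmult)
  finally show ?thesis .
qed

lemma nn_integral_mult_indicator_ge:
  assumes [measurable]: "f \<in> borel_measurable M" "S \<in> sets M"
    and "\<And>x. f x \<ge> 0" "\<And>x. x \<in> S \<Longrightarrow> c \<le> w x"
  shows "ennreal c * (\<integral>\<^sup>+x. ennreal (f x) * indicator S x \<partial>M)
       \<le> (\<integral>\<^sup>+x. ennreal (w x * f x) * indicator S x \<partial>M)"
proof -
  have "ennreal c * (\<integral>\<^sup>+x. ennreal (f x) * indicator S x \<partial>M)
      = (\<integral>\<^sup>+x. ennreal c * (ennreal (f x) * indicator S x) \<partial>M)"
    by (simp add: nn_integral_cmult)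
  also have "\<dots> \<le> (\<integral>\<^sup>+x. ennreal (w x * f x) * indicator S x \<partial>M)"
    using assms(3,4)
    by (intro nn_integral_mono) (auto simp: indicator_def ennreal_mult''[symmetric] mult_right_mono intro!: ennreal_leI)
  finally show ?thesis .
qed

lemma nn_integral_split_ball_annulus:
  fixes f :: "'a::euclidean_space \<Rightarrow> ennreal"
  assumes [measurable]: "f \<in> borel_measurable borel" and "r \<le> t"
  shows "(\<integral>\<^sup>+x. f x \<partial>lborel) = (\<integral>\<^sup>+x. f x * indicator (cball 0 r) x \<partial>lborel)
     + (\<integral>\<^sup>+x. f x * indicator (annulus r t) x \<partial>lborel)
     + (\<integral>\<^sup>+x. f x * indicator {x. t < norm x} x \<partial>lborel)"
proof -
  have [measurable]: "cball (0::'a) r \<in> sets borel" "{x::'a. t < norm x} \<in> sets borel"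
    by auto
  have "(\<integral>\<^sup>+x. f x \<partial>lborel) = (\<integral>\<^sup>+x. f x * indicator (cball 0 r) x
      + f x * indicator (annulus r t) x + f x * indicator {x. t < norm x} x \<partial>lborel)"
    using assms(2) by (intro nn_integral_cong) (auto simp: indicator_def annulus_def)
  also have "\<dots> = (\<integral>\<^sup>+x. f x * indicator (cball 0 r) x + f x * indicator (annulus r t) x \<partial>lborel)
      + (\<integral>\<^sup>+x. f x * indicator {x. t < norm x} x \<partial>lborel)"
    by (rule nn_integral_add) measurable
  also have "(\<integral>\<^sup>+x. f x * indicator (cball 0 r) x + f x * indicator (annulus r t) x \<partial>lborel)
      = (\<integral>\<^sup>+x. f x * indicator (cball 0 r) x \<partial>lborel) + (\<integral>\<^sup>+x. f x * indicator (annulus r t) x \<partial>lborel)"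
    by (rule nn_integral_add) measurable
  finally show ?thesis .
qed

lemma nn_integral_outside_ball_eq_SUP_annulus:
  fixes f :: "'a::euclidean_space \<Rightarrow> ennreal"
  assumes [measurable]: "f \<in> borel_measurable borel"
  shows "(\<integral>\<^sup>+x. f x * indicator {x. r < norm x} x \<partial>lborel)
       = (SUP n. \<integral>\<^sup>+x. f x * indicator (annulus r (r + real n)) x \<partial>lborel)"
proof -
  have outside: "{x. r < norm x} = (\<Union>n. annulus r (r + real n))"
    by (auto simp: annulus_def) (metis add.commute diff_le_eq real_arch_simple)
  have "incseq (\<lambda>n. annulus r (r + real n) :: 'a set)"
    by (auto simp: incseq_def annulus_def)
  then show ?thesis
    unfolding outside using SUP_emeasure_incseq[of "\<lambda>n. annulus r (r + real n)" "density lborel f"]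
    by (simp add: emeasure_density image_subset_iff)
qed

lemma nn_integral_annulus_scaling_le:
  fixes g :: "'a::euclidean_space \<Rightarrow> real"
  assumes [measurable]: "g \<in> borel_measurable borel"
    and s: "s > 1" and "0 \<le> q" "0 \<le> q'" "0 \<le> M"
    and inner: "\<And>x. \<rho> < norm x \<Longrightarrow> norm x \<le> s * \<rho> \<Longrightarrow> s ^ DIM('a) * g (s *\<^sub>R x) \<le> q * g x"
    and outer: "\<And>x. s * \<rho> < norm x \<Longrightarrow> s ^ DIM('a) * g (s *\<^sub>R x) \<le> q' * g x"
  shows "(\<integral>\<^sup>+x. ennreal (g x) * indicator (annulus (s * \<rho>) M) x \<partial>lborel)
     \<le> ennreal q * (\<integral>\<^sup>+x. ennreal (g x) * indicator (annulus \<rho> (s * \<rho>)) x \<partial>lborel)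
       + ennreal q' * (\<integral>\<^sup>+x. ennreal (g x) * indicator (annulus (s * \<rho>) M) x \<partial>lborel)"
proof -
  have "M \<le> s * M"
    using s \<open>0 \<le> M\<close> by (simp add: mult_le_cancel_right1)
  then have "(\<integral>\<^sup>+x. ennreal (g x) * indicator (annulus (s * \<rho>) M) x \<partial>lborel)
      \<le> (\<integral>\<^sup>+x. ennreal (g x) * indicator (annulus (s * \<rho>) (s * M)) x \<partial>lborel)"
    by (intro nn_integral_mono) (auto simp: indicator_def annulus_def)
  also have "\<dots> = ennreal (s ^ DIM('a))
      * (\<integral>\<^sup>+x. ennreal (g (s *\<^sub>R x)) * indicator (annulus (s * \<rho>) (s * M)) (s *\<^sub>R x) \<partial>lborel)"
    using s by (subst nn_integral_lborel_scaleR[where c = s]) auto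
  also have "\<dots> = (\<integral>\<^sup>+x. ennreal (s ^ DIM('a) * g (s *\<^sub>R x)) * indicator (annulus \<rho> M) x \<partial>lborel)"
    using s by (auto simp: annulus_def indicator_def ennreal_mult' nn_integral_cmult[symmetric]
        intro!: nn_integral_cong)
  also have "\<dots> \<le> (\<integral>\<^sup>+x. ennreal q * (ennreal (g x) * indicator (annulus \<rho> (s * \<rho>)) x)
      + ennreal q' * (ennreal (g x) * indicator (annulus (s * \<rho>) M) x) \<partial>lborel)"
    using inner outer \<open>0 \<le> q\<close> \<open>0 \<le> q'\<close>
    by (intro nn_integral_mono)
      (auto simp: annulus_def indicator_def ennreal_mult'[symmetric] not_le intro!: ennreal_leI)
  also have "\<dots> = ennreal q * (\<integral>\<^sup>+x. ennreal (g x) * indicator (annulus \<rho> (s * \<rho>)) x \<partial>lborel)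
      + ennreal q' * (\<integral>\<^sup>+x. ennreal (g x) * indicator (annulus (s * \<rho>) M) x \<partial>lborel)"
    by (simp add: nn_integral_add nn_integral_cmult)
  finally show ?thesis .
qed

text \<open>Substituting x = s y turns the hypotheses into: the integral of g over |x| > s\<rho> is at most q times
  the annulus part plus q' times itself. Absorbing the second term needs finiteness, hence the
  truncation to bounded annuli and the passage to the limit by monotone convergence.\<close>

lemma nn_integral_outside_ball_le_by_scaling:
  fixes g :: "'a::euclidean_space \<Rightarrow> real"
  assumes cont: "continuous_on UNIV g"
    and s: "s > 1" and "0 \<le> \<rho>" and q: "0 \<le> q" and q': "0 \<le> q'" "q' < 1"
    and inner: "\<And>x. \<rho> < norm x \<Longrightarrow> norm x \<le> s * \<rho> \<Longrightarrow> s ^ DIM('a) * g (s *\<^sub>R x) \<le> q * g x"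
    and outer: "\<And>x. s * \<rho> < norm x \<Longrightarrow> s ^ DIM('a) * g (s *\<^sub>R x) \<le> q' * g x"
  shows "(\<integral>\<^sup>+x. ennreal (g x) * indicator {x. s * \<rho> < norm x} x \<partial>lborel)
       \<le> ennreal (q / (1 - q')) * (\<integral>\<^sup>+x. ennreal (g x) * indicator (annulus \<rho> (s * \<rho>)) x \<partial>lborel)"
proof -
  have [measurable]: "g \<in> borel_measurable borel"
    using cont borel_measurable_continuous_onI by blast
  let ?A = "\<integral>\<^sup>+x. ennreal (g x) * indicator (annulus \<rho> (s * \<rho>)) x \<partial>lborel"
  let ?K = "\<lambda>n::nat. \<integral>\<^sup>+x. ennreal (g x) * indicator (annulus (s * \<rho>) (s * \<rho> + real n)) x \<partial>lborel"
  have "?K n \<le> ennreal (q / (1 - q')) * ?A" for n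
  proof (rule ennreal_le_absorb[OF _ _ _ q q'])
    show "?K n < \<infinity>" "?A < \<infinity>"
      by (rule nn_integral_continuous_on_bounded_finite[OF cont bounded_annulus annulus_borel])+
    show "?K n \<le> ennreal q * ?A + ennreal q' * ?K n"
      using s \<open>0 \<le> \<rho>\<close>
      by (intro nn_integral_annulus_scaling_le inner outer q q') auto
  qed
  then show ?thesis
    by (simp add: nn_integral_outside_ball_eq_SUP_annulus SUP_least)
qed

context
  fixes f :: "'a::euclidean_space \<Rightarrow> real" and \<rho> s q q' :: real
  assumes cont: "continuous_on UNIV f" and pos: "\<And>x. f x > 0"
    and \<rho>: "\<rho> > 0" and s: "s > 1" and q: "0 \<le> q" and q': "0 \<le> q'" "q' < 1"
    and inner: "\<And>x. \<rho> < norm x \<Longrightarrow> norm x \<le> s * \<rho> \<Longrightarrow> s ^ (DIM('a) + 2) * f (s *\<^sub>R x) \<le> q * f x"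
    and outer: "\<And>x. s * \<rho> < norm x \<Longrightarrow> s ^ (DIM('a) + 2) * f (s *\<^sub>R x) \<le> q' * f x"
begin

lemma second_moment_outside_ball_le_by_scaling:
  "(\<integral>\<^sup>+x. ennreal ((norm x)\<^sup>2 * f x) * indicator {x. s * \<rho> < norm x} x \<partial>lborel)
     \<le> ennreal (q / (1 - q')) * (\<integral>\<^sup>+x. ennreal ((norm x)\<^sup>2 * f x) * indicator (annulus \<rho> (s * \<rho>)) x \<partial>lborel)"
proof (rule nn_integral_outside_ball_le_by_scaling)
  have scale: "s ^ DIM('a) * ((norm (s *\<^sub>R x))\<^sup>2 * f (s *\<^sub>R x)) = (norm x)\<^sup>2 * (s ^ (DIM('a) + 2) * f (s *\<^sub>R x))"
    for x :: 'a
    using s by (simp add: power_mult_distrib power_add power2_eq_square algebra_simps)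
  show "s ^ DIM('a) * ((norm (s *\<^sub>R x))\<^sup>2 * f (s *\<^sub>R x)) \<le> q * ((norm x)\<^sup>2 * f x)"
    if "\<rho> < norm x" "norm x \<le> s * \<rho>" for x
    unfolding scale using mult_left_mono[OF inner[OF that], of "(norm x)\<^sup>2"]
    by (simp add: mult.left_commute)
  show "s ^ DIM('a) * ((norm (s *\<^sub>R x))\<^sup>2 * f (s *\<^sub>R x)) \<le> q' * ((norm x)\<^sup>2 * f x)"
    if "s * \<rho> < norm x" for x
    unfolding scale using mult_left_mono[OF outer[OF that], of "(norm x)\<^sup>2"]
    by (simp add: mult.left_commute)
qed (use cont s \<rho> q q' in \<open>auto intro!: continuous_intros\<close>)

lemma nn_integral_finite_by_scaling: "(\<integral>\<^sup>+x. ennreal (f x) \<partial>lborel) < \<infinity>"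
proof -
  have [measurable]: "f \<in> borel_measurable borel" "{x::'a. s * \<rho> < norm x} \<in> sets borel"
    using cont borel_measurable_continuous_onI by auto
  have "continuous_on UNIV (\<lambda>x. (norm x)\<^sup>2 * f x)"
    by (intro continuous_intros cont)
  then have "(\<integral>\<^sup>+x. ennreal ((norm x)\<^sup>2 * f x) * indicator (annulus \<rho> (s * \<rho>)) x \<partial>lborel) < \<infinity>"
    by (rule nn_integral_continuous_on_bounded_finite[OF _ bounded_annulus annulus_borel])
  then have "(\<integral>\<^sup>+x. ennreal ((norm x)\<^sup>2 * f x) * indicator {x. s * \<rho> < norm x} x \<partial>lborel) < \<infinity>"
    by (intro order.strict_trans1[OF second_moment_outside_ball_le_by_scaling])
      (simp add: ennreal_mult_less_top)
  moreover have "ennreal ((s * \<rho>)\<^sup>2) * (\<integral>\<^sup>+x. ennreal (f x) * indicator {x. s * \<rho> < norm x} x \<partial>lborel)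
      \<le> (\<integral>\<^sup>+x. ennreal ((norm x)\<^sup>2 * f x) * indicator {x. s * \<rho> < norm x} x \<partial>lborel)"
  proof (rule nn_integral_mult_indicator_ge)
    show "(s * \<rho>)\<^sup>2 \<le> (norm x)\<^sup>2" if "x \<in> {x. s * \<rho> < norm x}" for x
      using that s \<rho> by (intro power_mono) auto
  qed (auto intro: less_imp_le pos)
  ultimately have "ennreal ((s * \<rho>)\<^sup>2) * (\<integral>\<^sup>+x. ennreal (f x) * indicator {x. s * \<rho> < norm x} x \<partial>lborel) < \<infinity>"
    by (simp add: order.strict_trans1)
  then have "(\<integral>\<^sup>+x. ennreal (f x) * indicator {x. s * \<rho> < norm x} x \<partial>lborel) < \<infinity>"
    using s \<rho> by (auto simp: ennreal_mult_less_top)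
  moreover have "(\<integral>\<^sup>+x. ennreal (f x) * indicator S x \<partial>lborel) < \<infinity>" if "bounded S" "S \<in> sets borel" for S
    using that by (rule nn_integral_continuous_on_bounded_finite[OF cont])
  ultimately show ?thesis
    using s \<rho> by (subst nn_integral_split_ball_annulus[where r = \<rho> and t = "s * \<rho>"])
      (auto simp: bounded_annulus)
qed

lemma second_moment_le_by_scaling:
  "(\<integral>\<^sup>+x. ennreal ((norm x)\<^sup>2 * f x) \<partial>lborel)
     \<le> ennreal (s\<^sup>2 * \<rho>\<^sup>2 * (1 + q / (1 - q'))) * (\<integral>\<^sup>+x. ennreal (f x) \<partial>lborel)"
proof -
  have [measurable]: "f \<in> borel_measurable borel" "cball (0::'a) \<rho> \<in> sets borel"
    using cont borel_measurable_continuous_onI by auto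
  have f0: "f x \<ge> 0" for x
    using pos[of x] by simp
  define c where "c = q / (1 - q')"
  define C where "C = s\<^sup>2 * \<rho>\<^sup>2 * (1 + c)"
  have "c \<ge> 0"
    unfolding c_def using q q' by simp
  have "1 * 1 \<le> s\<^sup>2 * (1 + c)"
    using s \<open>c \<ge> 0\<close> by (intro mult_mono) auto
  then have "\<rho>\<^sup>2 \<le> C"
    unfolding C_def using mult_left_mono[of "1 * 1" "s\<^sup>2 * (1 + c)" "\<rho>\<^sup>2"] by (simp add: algebra_simps)
  define F where "F S = (\<integral>\<^sup>+x. ennreal (f x) * indicator S x \<partial>lborel)" for S :: "'a set"
  define G where "G S = (\<integral>\<^sup>+x. ennreal ((norm x)\<^sup>2 * f x) * indicator S x \<partial>lborel)" for S :: "'a set"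
  have ball: "G (cball 0 \<rho>) \<le> ennreal (\<rho>\<^sup>2) * F (cball 0 \<rho>)"
    unfolding G_def F_def by (rule nn_integral_mult_indicator_le) (auto intro!: f0 power_mono)
  have "G (annulus \<rho> (s * \<rho>)) \<le> ennreal ((s * \<rho>)\<^sup>2) * F (annulus \<rho> (s * \<rho>))"
    unfolding G_def F_def by (rule nn_integral_mult_indicator_le) (auto intro!: f0 power_mono simp: annulus_def)
  then have "ennreal (1 + c) * G (annulus \<rho> (s * \<rho>)) \<le> ennreal (1 + c) * (ennreal ((s * \<rho>)\<^sup>2) * F (annulus \<rho> (s * \<rho>)))"
    by (rule mult_left_mono) simp
  also have "\<dots> = ennreal C * F (annulus \<rho> (s * \<rho>))"
    using \<open>c \<ge> 0\<close> by (simp add: C_def ennreal_mult power_mult_distrib mult_ac)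
  finally have annulus: "ennreal (1 + c) * G (annulus \<rho> (s * \<rho>)) \<le> ennreal C * F (annulus \<rho> (s * \<rho>))" .
  have "(\<integral>\<^sup>+x. ennreal ((norm x)\<^sup>2 * f x) \<partial>lborel)
      = G (cball 0 \<rho>) + G (annulus \<rho> (s * \<rho>)) + G {x. s * \<rho> < norm x}"
    unfolding G_def using s \<rho> by (intro nn_integral_split_ball_annulus) auto
  also have "\<dots> \<le> ennreal (\<rho>\<^sup>2) * F (cball 0 \<rho>) + ennreal (1 + c) * G (annulus \<rho> (s * \<rho>))"
    using ball second_moment_outside_ball_le_by_scaling \<open>c \<ge> 0\<close>
    by (simp add: G_def c_def add.assoc add_mono distrib_right ennreal_plus)
  also have "\<dots> \<le> ennreal C * F (cball 0 \<rho>) + ennreal C * F (annulus \<rho> (s * \<rho>))"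
    by (intro add_mono mult_right_mono ennreal_leI \<open>\<rho>\<^sup>2 \<le> C\<close> annulus) simp
  also have "\<dots> \<le> ennreal C * (\<integral>\<^sup>+x. ennreal (f x) \<partial>lborel)"
    unfolding F_def using s \<rho>
    by (subst (2) nn_integral_split_ball_annulus[where r = \<rho> and t = "s * \<rho>"]) (auto simp: distrib_left)
  finally show ?thesis
    by (simp add: C_def c_def)
qed

end

section \<open>Densities of quadratic growth\<close>

lemma power_mult_exp_le:
  fixes c e r :: real
  assumes "0 < c" "c * exp (- e) \<le> r" "r \<le> 1" "k \<le> n"
  shows "c ^ n * exp (- e * real n) \<le> r ^ k"
proof -
  have "0 \<le> r"
    using assms(1,2) by (smt (verit) exp_gt_zero mult_pos_pos)
  have "c ^ n * exp (- e * real n) = (c * exp (- e)) ^ n"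
    by (simp add: power_mult_distrib exp_of_nat_mult[symmetric] mult.commute)
  also have "\<dots> \<le> r ^ n"
    using assms by (intro power_mono) auto
  also have "\<dots> \<le> r ^ k"
    using assms \<open>0 \<le> r\<close> by (intro power_decreasing) auto
  finally show ?thesis .
qed

lemma exp_double_ge_Taylor_square:
  fixes y :: real
  assumes "0 \<le> y"
  shows "(1 + y + y\<^sup>2 / 2)\<^sup>2 \<le> exp (2 * y)"
proof -
  have "(1 + y + y\<^sup>2 / 2)\<^sup>2 \<le> (exp y)\<^sup>2"
    using exp_lower_Taylor_quadratic[OF assms] assms by (intro power_mono) auto
  then show ?thesis
    by (simp add: exp_double[symmetric])
qed

lemma three_halves_exp_neg_le:
  shows "3/2 * exp (- (5/8)) \<le> (41/50 :: real)" and "3/2 * exp (- (45/32)) \<le> (2/5 :: real)"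
proof -
  have "150/82 \<le> exp (5/8 :: real)" "15/4 \<le> exp (45/32 :: real)"
    using exp_double_ge_Taylor_square[of "5/16"] exp_double_ge_Taylor_square[of "45/64"]
    by (simp_all add: power2_eq_square)
  then show "3/2 * exp (- (5/8)) \<le> (41/50 :: real)" "3/2 * exp (- (45/32)) \<le> (2/5 :: real)"
    by (simp_all add: exp_minus field_simps)
qed

lemma scaled_exp_neg_le_of_growth:
  fixes W :: "'a::real_normed_vector \<Rightarrow> real"
  assumes grow: "W x + 5/8 * M * (norm x)\<^sup>2 \<le> W ((3/2) *\<^sub>R x)"
    and "e * real n \<le> 5/8 * M * (norm x)\<^sup>2" "3/2 * exp (- e) \<le> r" "r \<le> 1" "k \<le> n"
  shows "(3/2) ^ n * exp (- W ((3/2) *\<^sub>R x)) \<le> r ^ k * exp (- W x)"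
proof -
  have "exp (- W ((3/2) *\<^sub>R x)) \<le> exp (- e * real n) * exp (- W x)"
    using assms(1,2) by (simp add: exp_add[symmetric])
  then have "(3/2) ^ n * exp (- W ((3/2) *\<^sub>R x)) \<le> ((3/2) ^ n * exp (- e * real n)) * exp (- W x)"
    by (simp add: mult.assoc mult_left_mono)
  also have "\<dots> \<le> r ^ k * exp (- W x)"
    using assms(3-5) by (intro mult_right_mono power_mult_exp_le) auto
  finally show ?thesis .
qed

lemma exp_neg_decay_of_quadratic_growth:
  fixes W :: "'a::euclidean_space \<Rightarrow> real"
  assumes M: "M > 0" and \<rho>: "\<rho> > 0"
    and big: "real DIM('a) + 2 \<le> M * \<rho>\<^sup>2"
    and grow: "\<And>x. \<rho> < norm x \<Longrightarrow> W x + 5/8 * M * (norm x)\<^sup>2 \<le> W ((3/2) *\<^sub>R x)"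
  shows "\<rho> < norm x \<Longrightarrow> (3/2) ^ (DIM('a) + 2) * exp (- W ((3/2) *\<^sub>R x)) \<le> (41/50) ^ 3 * exp (- W x)"
    and "3/2 * \<rho> < norm x \<Longrightarrow> (3/2) ^ (DIM('a) + 2) * exp (- W ((3/2) *\<^sub>R x)) \<le> (2/5) ^ 3 * exp (- W x)"
proof -
  have n: "3 \<le> DIM('a) + 2"
    using DIM_positive[where 'a='a] by linarith
  show "(3/2) ^ (DIM('a) + 2) * exp (- W ((3/2) *\<^sub>R x)) \<le> (41/50) ^ 3 * exp (- W x)"
    if "\<rho> < norm x"
  proof (rule scaled_exp_neg_le_of_growth[OF grow[OF that] _ three_halves_exp_neg_le(1) _ n])
    have "M * \<rho>\<^sup>2 \<le> M * (norm x)\<^sup>2"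
      using that \<rho> M by (intro mult_left_mono power_mono) auto
    then show "5/8 * real (DIM('a) + 2) \<le> 5/8 * M * (norm x)\<^sup>2"
      using big by simp
  qed simp
  show "(3/2) ^ (DIM('a) + 2) * exp (- W ((3/2) *\<^sub>R x)) \<le> (2/5) ^ 3 * exp (- W x)"
    if "3/2 * \<rho> < norm x"
  proof (rule scaled_exp_neg_le_of_growth[OF grow _ three_halves_exp_neg_le(2) _ n])
    show "\<rho> < norm x"
      using that \<rho> by linarith
    have "9/4 * \<rho>\<^sup>2 \<le> (norm x)\<^sup>2"
      using that \<rho> power_mono[of "3/2 * \<rho>" "norm x" 2] by (simp add: power2_eq_square)
    then have "9/4 * (M * \<rho>\<^sup>2) \<le> M * (norm x)\<^sup>2"
      using M mult_left_mono[of "9/4 * \<rho>\<^sup>2" "(norm x)\<^sup>2" M] by (simp add: algebra_simps)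
    then show "45/32 * real (DIM('a) + 2) \<le> 5/8 * M * (norm x)\<^sup>2"
      using big by simp
  qed simp
qed

lemma second_moment_le_of_quadratic_growth:
  fixes W :: "'a::euclidean_space \<Rightarrow> real"
  assumes cont: "continuous_on UNIV W" and M: "M > 0" and \<rho>: "\<rho> > 0"
    and big: "real DIM('a) + 2 \<le> M * \<rho>\<^sup>2"
    and grow: "\<And>x. \<rho> < norm x \<Longrightarrow> W x + 5/8 * M * (norm x)\<^sup>2 \<le> W ((3/2) *\<^sub>R x)"
  shows "0 < (\<integral>\<^sup>+x. ennreal (exp (- W x)) \<partial>lborel)" "(\<integral>\<^sup>+x. ennreal (exp (- W x)) \<partial>lborel) < \<infinity>"
    "(\<integral>\<^sup>+x. ennreal ((norm x)\<^sup>2 * exp (- W x)) \<partial>lborel)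
       \<le> ennreal (18/5 * \<rho>\<^sup>2) * (\<integral>\<^sup>+x. ennreal (exp (- W x)) \<partial>lborel)"
proof -
  note decay = exp_neg_decay_of_quadratic_growth[OF M \<rho> big grow]
  have cont_f: "continuous_on UNIV (\<lambda>x. exp (- W x))"
    by (intro continuous_intros cont)
  have "(1::real) < 3/2" "(0::real) \<le> (41/50) ^ 3" "(0::real) \<le> (2/5) ^ 3" "(2/5::real) ^ 3 < 1"
    by (simp_all add: power3_eq_cube)
  note scaling = cont_f exp_gt_zero \<rho> this decay(1) decay(2)
  show "0 < (\<integral>\<^sup>+x. ennreal (exp (- W x)) \<partial>lborel)"
    by (intro nn_integral_lborel_pos borel_measurable_continuous_onI cont_f exp_gt_zero)
  show "(\<integral>\<^sup>+x. ennreal (exp (- W x)) \<partial>lborel) < \<infinity>"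
    using nn_integral_finite_by_scaling[OF scaling] by simp
  have "ennreal ((3/2)\<^sup>2 * \<rho>\<^sup>2 * (1 + (41/50) ^ 3 / (1 - (2/5) ^ 3))) \<le> ennreal (18/5 * \<rho>\<^sup>2)"
    by (intro ennreal_leI) (simp add: power2_eq_square power3_eq_cube)
  from order.trans[OF second_moment_le_by_scaling[OF scaling] mult_right_mono[OF this]]
  show "(\<integral>\<^sup>+x. ennreal ((norm x)\<^sup>2 * exp (- W x)) \<partial>lborel)
       \<le> ennreal (18/5 * \<rho>\<^sup>2) * (\<integral>\<^sup>+x. ennreal (exp (- W x)) \<partial>lborel)"
    by simp
qed

section \<open>The two factors of the density\<close>

lemma dissipative_potential_growth:
  fixes U :: "'a::real_inner \<Rightarrow> real" and gradU :: "'a \<Rightarrow> 'a"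
  assumes deriv: "\<And>x. (U has_derivative (\<lambda>h. gradU x \<bullet> h)) (at x)"
    and grad0: "gradU 0 = 0"
    and diss: "\<And>x y. norm (x - y) > R \<Longrightarrow> (gradU x - gradU y) \<bullet> (x - y) \<ge> m * (norm (x - y))\<^sup>2"
    and x: "norm x > R"
  shows "U x + 5/8 * m * (norm x)\<^sup>2 \<le> U ((3/2) *\<^sub>R x)"
proof -
  \<comment> \<open>h is nondecreasing on [1, 3/2]: by dissipativity against 0, its derivative
    gradU (t x) \<bullet> x - m t |x|^2 is nonnegative there.\<close>
  define h where "h t = U (t *\<^sub>R x) - m * (norm x)\<^sup>2 * t\<^sup>2 / 2" for t :: real
  have h_deriv: "(h has_real_derivative (gradU (t *\<^sub>R x) \<bullet> x - m * (norm x)\<^sup>2 * t)) (at t)" for t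
  proof -
    have "((\<lambda>t. U (t *\<^sub>R x)) has_derivative (\<lambda>k. gradU (t *\<^sub>R x) \<bullet> (k *\<^sub>R x))) (at t)"
      by (rule has_derivative_compose[OF _ deriv]) (auto intro!: derivative_eq_intros)
    then have "((\<lambda>t. U (t *\<^sub>R x)) has_real_derivative (gradU (t *\<^sub>R x) \<bullet> x)) (at t)"
      by (rule has_derivative_imp_has_field_derivative) simp
    then show ?thesis
      unfolding h_def by (auto intro!: derivative_eq_intros)
  qed
  have "h 1 \<le> h (3/2)"
  proof (rule DERIV_nonneg_imp_increasing_open[of 1 "3/2" h])
    fix t :: real
    assume t: "1 < t" "t < 3/2"
    have "norm x \<le> t * norm x"
      using t by (simp add: mult_le_cancel_right1)
    then have "m * (norm (t *\<^sub>R x))\<^sup>2 \<le> gradU (t *\<^sub>R x) \<bullet> (t *\<^sub>R x)"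
      using diss[of "t *\<^sub>R x" 0] grad0 x t by simp
    then have "t * (m * (norm x)\<^sup>2 * t) \<le> t * (gradU (t *\<^sub>R x) \<bullet> x)"
      using t by (simp add: power_mult_distrib power2_eq_square algebra_simps)
    then have "m * (norm x)\<^sup>2 * t \<le> gradU (t *\<^sub>R x) \<bullet> x"
      using t by simp
    then show "\<exists>y. (h has_real_derivative y) (at t) \<and> 0 \<le> y"
      using h_deriv[of t] by (intro exI[of _ "gradU (t *\<^sub>R x) \<bullet> x - m * (norm x)\<^sup>2 * t"]) simp
  next
    show "continuous_on {1..3/2} h"
      using h_deriv by (meson DERIV_isCont continuous_at_imp_continuous_on)
  qed simp
  then show ?thesis
    unfolding h_def by (simp add: power2_eq_square algebra_simps)
qed

lemma second_moment_le_of_dissipative: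
  fixes U :: "'a::euclidean_space \<Rightarrow> real" and gradU :: "'a \<Rightarrow> 'a"
  assumes deriv: "\<And>x. (U has_derivative (\<lambda>h. gradU x \<bullet> h)) (at x)"
    and grad0: "gradU 0 = 0" and m: "m > 0" and R: "R > 0"
    and diss: "\<And>x y. norm (x - y) > R \<Longrightarrow> (gradU x - gradU y) \<bullet> (x - y) \<ge> m * (norm (x - y))\<^sup>2"
  shows "0 < (\<integral>\<^sup>+x. ennreal (exp (- U x)) \<partial>lborel)" "(\<integral>\<^sup>+x. ennreal (exp (- U x)) \<partial>lborel) < \<infinity>"
    "(\<integral>\<^sup>+x. ennreal ((norm x)\<^sup>2 * exp (- U x)) \<partial>lborel)
       \<le> ennreal (18/5 * (R\<^sup>2 + (real DIM('a) + 2) / m)) * (\<integral>\<^sup>+x. ennreal (exp (- U x)) \<partial>lborel)"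
proof -
  define \<rho> where "\<rho> = sqrt (R\<^sup>2 + (real DIM('a) + 2) / m)"
  have \<rho>_sq: "\<rho>\<^sup>2 = R\<^sup>2 + (real DIM('a) + 2) / m"
    unfolding \<rho>_def using m by (intro real_sqrt_pow2) auto
  have "R \<le> \<rho>"
    unfolding \<rho>_def using R m by (intro real_le_rsqrt) auto
  have "continuous_on UNIV U"
    using deriv by (meson continuous_at_imp_continuous_on has_derivative_continuous)
  moreover have "real DIM('a) + 2 \<le> m * \<rho>\<^sup>2"
    unfolding \<rho>_sq using m by (simp add: field_simps)
  moreover have "U x + 5/8 * m * (norm x)\<^sup>2 \<le> U ((3/2) *\<^sub>R x)" if "\<rho> < norm x" for x
    using \<open>R \<le> \<rho>\<close> that by (intro dissipative_potential_growth[OF deriv grad0 diss]) auto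
  ultimately show "0 < (\<integral>\<^sup>+x. ennreal (exp (- U x)) \<partial>lborel)" "(\<integral>\<^sup>+x. ennreal (exp (- U x)) \<partial>lborel) < \<infinity>"
    "(\<integral>\<^sup>+x. ennreal ((norm x)\<^sup>2 * exp (- U x)) \<partial>lborel)
       \<le> ennreal (18/5 * (R\<^sup>2 + (real DIM('a) + 2) / m)) * (\<integral>\<^sup>+x. ennreal (exp (- U x)) \<partial>lborel)"
    using second_moment_le_of_quadratic_growth[OF _ m, of U \<rho>] R \<open>R \<le> \<rho>\<close> by (simp_all add: \<rho>_sq)
qed

lemma second_moment_le_gaussian:
  fixes a :: real
  assumes a: "a > 0"
  shows "0 < (\<integral>\<^sup>+(u::'a::euclidean_space). ennreal (exp (- (a * (norm u)\<^sup>2))) \<partial>lborel)"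
    "(\<integral>\<^sup>+(u::'a). ennreal (exp (- (a * (norm u)\<^sup>2))) \<partial>lborel) < \<infinity>"
    "(\<integral>\<^sup>+(u::'a). ennreal ((norm u)\<^sup>2 * exp (- (a * (norm u)\<^sup>2))) \<partial>lborel)
       \<le> ennreal (9/5 * ((real DIM('a) + 2) / a)) * (\<integral>\<^sup>+(u::'a). ennreal (exp (- (a * (norm u)\<^sup>2))) \<partial>lborel)"
proof -
  define \<rho> where "\<rho> = sqrt ((real DIM('a) + 2) / (2 * a))"
  have \<rho>_sq: "\<rho>\<^sup>2 = (real DIM('a) + 2) / (2 * a)"
    unfolding \<rho>_def using a by (intro real_sqrt_pow2) auto
  have "\<rho> > 0"
    unfolding \<rho>_def using a by simp
  have big: "real DIM('a) + 2 \<le> (2 * a) * \<rho>\<^sup>2"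
    unfolding \<rho>_sq using a by simp
  have grow: "a * (norm x)\<^sup>2 + 5/8 * (2 * a) * (norm x)\<^sup>2 \<le> a * (norm ((3/2) *\<^sub>R x))\<^sup>2" for x :: 'a
    by (simp add: power_mult_distrib power2_eq_square)
  have cont: "continuous_on UNIV (\<lambda>u::'a. a * (norm u)\<^sup>2)"
    by (intro continuous_intros)
  have "2 * a > 0"
    using a by simp
  note moments = second_moment_le_of_quadratic_growth[OF cont \<open>2 * a > 0\<close> \<open>\<rho> > 0\<close> big grow]
  show "0 < (\<integral>\<^sup>+(u::'a::euclidean_space). ennreal (exp (- (a * (norm u)\<^sup>2))) \<partial>lborel)"
    "(\<integral>\<^sup>+(u::'a). ennreal (exp (- (a * (norm u)\<^sup>2))) \<partial>lborel) < \<infinity>"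
    using moments(1,2) .
  have const: "18/5 * \<rho>\<^sup>2 = 9/5 * ((real DIM('a) + 2) / a)"
    unfolding \<rho>_sq using a by (simp add: field_simps)
  from moments(3)[unfolded const] show "(\<integral>\<^sup>+(u::'a). ennreal ((norm u)\<^sup>2 * exp (- (a * (norm u)\<^sup>2))) \<partial>lborel)
       \<le> ennreal (9/5 * ((real DIM('a) + 2) / a)) * (\<integral>\<^sup>+(u::'a). ennreal (exp (- (a * (norm u)\<^sup>2))) \<partial>lborel)" .
qed

lemma dissipativity_le_Lipschitz:
  fixes gradU :: "'a::euclidean_space \<Rightarrow> 'a"
  assumes lip: "\<And>x y. norm (gradU x - gradU y) \<le> L * norm (x - y)"
    and grad0: "gradU 0 = 0" and R: "R > 0"
    and diss: "\<And>x y. norm (x - y) > R \<Longrightarrow> (gradU x - gradU y) \<bullet> (x - y) \<ge> m * (norm (x - y))\<^sup>2"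
  shows "m \<le> L"
proof -
  obtain b :: 'a where "b \<in> Basis"
    using nonempty_Basis by blast
  define x where "x = (2 * R) *\<^sub>R b"
  have nx: "norm x = 2 * R"
    using \<open>b \<in> Basis\<close> R by (simp add: x_def)
  then have "m * (norm x)\<^sup>2 \<le> gradU x \<bullet> x"
    using diss[of x 0] grad0 R by simp
  also have "\<dots> \<le> norm (gradU x) * norm x"
    by (rule norm_cauchy_schwarz)
  also have "\<dots> \<le> L * (norm x)\<^sup>2"
    using mult_right_mono[OF lip[of x 0] norm_ge_zero[of x]] grad0 by (simp add: power2_eq_square)
  finally show ?thesis
    using nx R by simp
qed

section \<open>Product densities\<close>

lemma norm_add_squared_le:
  fixes x u :: "'a::real_normed_vector"
  shows "(norm (x + u))\<^sup>2 \<le> 2 * (norm x)\<^sup>2 + 2 * (norm u)\<^sup>2"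
proof -
  have "(norm (x + u))\<^sup>2 \<le> (norm x + norm u)\<^sup>2"
    by (intro power_mono norm_triangle_ineq) auto
  then show ?thesis
    using sum_squares_bound[of "norm x" "norm u"] by (simp add: power2_sum)
qed

lemma nn_integral_pair_second_moment_le:
  fixes f g :: "'a::euclidean_space \<Rightarrow> real"
  assumes [measurable]: "f \<in> borel_measurable borel" "g \<in> borel_measurable borel"
    and f0: "\<And>x. 0 \<le> f x" and g0: "\<And>u. 0 \<le> g u"
  shows "(\<integral>\<^sup>+z. ennreal (((norm (fst z))\<^sup>2 + (norm (fst z + snd z))\<^sup>2) * (f (fst z) * g (snd z))) \<partial>lborel)
    \<le> 3 * ((\<integral>\<^sup>+x. ennreal ((norm x)\<^sup>2 * f x) \<partial>lborel) * (\<integral>\<^sup>+u. ennreal (g u) \<partial>lborel))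
      + 2 * ((\<integral>\<^sup>+x. ennreal (f x) \<partial>lborel) * (\<integral>\<^sup>+u. ennreal ((norm u)\<^sup>2 * g u) \<partial>lborel))"
proof -
  have [measurable]: "(fst :: 'a \<times> 'a \<Rightarrow> 'a) \<in> borel_measurable borel"
    "(snd :: 'a \<times> 'a \<Rightarrow> 'a) \<in> borel_measurable borel"
    by (intro borel_measurable_continuous_onI continuous_intros)+
  let ?X = "\<lambda>z. (norm (fst z))\<^sup>2 * f (fst z) * g (snd z)"
  let ?Y = "\<lambda>z. f (fst z) * ((norm (snd z))\<^sup>2 * g (snd z))"
  have "ennreal (((norm (fst z))\<^sup>2 + (norm (fst z + snd z))\<^sup>2) * (f (fst z) * g (snd z)))
      \<le> 3 * ennreal (?X z) + 2 * ennreal (?Y z)" for z :: "'a \<times> 'a"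
  proof -
    have "((norm (fst z))\<^sup>2 + (norm (fst z + snd z))\<^sup>2) * (f (fst z) * g (snd z))
        \<le> (3 * (norm (fst z))\<^sup>2 + 2 * (norm (snd z))\<^sup>2) * (f (fst z) * g (snd z))"
      using norm_add_squared_le[of "fst z" "snd z"] f0 g0 by (intro mult_right_mono) auto
    also have "\<dots> = 3 * ?X z + 2 * ?Y z"
      by (simp add: algebra_simps)
    finally have "ennreal (((norm (fst z))\<^sup>2 + (norm (fst z + snd z))\<^sup>2) * (f (fst z) * g (snd z)))
        \<le> ennreal (3 * ?X z + 2 * ?Y z)"
      by (rule ennreal_leI)
    also have "\<dots> = 3 * ennreal (?X z) + 2 * ennreal (?Y z)"
      using f0 g0 by (simp add: ennreal_plus ennreal_mult)
    finally show ?thesis .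
  qed
  then have "(\<integral>\<^sup>+z. ennreal (((norm (fst z))\<^sup>2 + (norm (fst z + snd z))\<^sup>2) * (f (fst z) * g (snd z))) \<partial>lborel)
      \<le> (\<integral>\<^sup>+z. 3 * ennreal (?X z) + 2 * ennreal (?Y z) \<partial>lborel)"
    by (intro nn_integral_mono)
  also have "\<dots> = 3 * (\<integral>\<^sup>+z. ennreal (?X z) \<partial>lborel) + 2 * (\<integral>\<^sup>+z. ennreal (?Y z) \<partial>lborel)"
    by (simp add: nn_integral_add nn_integral_cmult)
  also have "(\<integral>\<^sup>+z. ennreal (?X z) \<partial>lborel)
      = (\<integral>\<^sup>+x. ennreal ((norm x)\<^sup>2 * f x) \<partial>lborel) * (\<integral>\<^sup>+u. ennreal (g u) \<partial>lborel)"
    by (rule nn_integral_lborel_pair_mult) (auto intro: f0 g0 mult_nonneg_nonneg)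
  also have "(\<integral>\<^sup>+z. ennreal (?Y z) \<partial>lborel)
      = (\<integral>\<^sup>+x. ennreal (f x) \<partial>lborel) * (\<integral>\<^sup>+u. ennreal ((norm u)\<^sup>2 * g u) \<partial>lborel)"
    by (rule nn_integral_lborel_pair_mult) (auto intro: f0 g0 mult_nonneg_nonneg)
  finally show ?thesis .
qed

lemma pair_second_moment_ratio_le:
  fixes f g :: "'a::euclidean_space \<Rightarrow> real"
  assumes [measurable]: "f \<in> borel_measurable borel" "g \<in> borel_measurable borel"
    and f0: "\<And>x. 0 \<le> f x" and g0: "\<And>u. 0 \<le> g u"
    and "0 \<le> A" "0 \<le> B" and C: "3 * A + 2 * B \<le> C"
    and Zf: "0 < (\<integral>\<^sup>+x. ennreal (f x) \<partial>lborel)" "(\<integral>\<^sup>+x. ennreal (f x) \<partial>lborel) < \<infinity>"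
    and Qf: "(\<integral>\<^sup>+x. ennreal ((norm x)\<^sup>2 * f x) \<partial>lborel) \<le> ennreal A * (\<integral>\<^sup>+x. ennreal (f x) \<partial>lborel)"
    and Zg: "0 < (\<integral>\<^sup>+u. ennreal (g u) \<partial>lborel)" "(\<integral>\<^sup>+u. ennreal (g u) \<partial>lborel) < \<infinity>"
    and Qg: "(\<integral>\<^sup>+u. ennreal ((norm u)\<^sup>2 * g u) \<partial>lborel) \<le> ennreal B * (\<integral>\<^sup>+u. ennreal (g u) \<partial>lborel)"
  shows "0 < (\<integral>\<^sup>+z. ennreal (f (fst z) * g (snd z)) \<partial>lborel)
    \<and> (\<integral>\<^sup>+z. ennreal (f (fst z) * g (snd z)) \<partial>lborel) < \<infinity>
    \<and> (\<integral>\<^sup>+z. ennreal (((norm (fst z))\<^sup>2 + (norm (fst z + snd z))\<^sup>2) * (f (fst z) * g (snd z))) \<partial>lborel)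
        / (\<integral>\<^sup>+z. ennreal (f (fst z) * g (snd z)) \<partial>lborel)
      \<le> ennreal C"
proof -
  define Zf Zg where "Zf = (\<integral>\<^sup>+x. ennreal (f x) \<partial>lborel)" and "Zg = (\<integral>\<^sup>+u. ennreal (g u) \<partial>lborel)"
  have Z: "(\<integral>\<^sup>+z. ennreal (f (fst z) * g (snd z)) \<partial>lborel) = Zf * Zg"
    unfolding Zf_def Zg_def by (rule nn_integral_lborel_pair_mult) (auto intro: f0 g0)
  note nn_integral_pair_second_moment_le[OF assms(1-4), folded Zf_def Zg_def]
  also have "3 * ((\<integral>\<^sup>+x. ennreal ((norm x)\<^sup>2 * f x) \<partial>lborel) * Zg)
      + 2 * (Zf * (\<integral>\<^sup>+u. ennreal ((norm u)\<^sup>2 * g u) \<partial>lborel))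
      \<le> 3 * (ennreal A * Zf * Zg) + 2 * (Zf * (ennreal B * Zg))"
    unfolding Zf_def Zg_def using Qf Qg by (intro add_mono mult_left_mono mult_right_mono) auto
  also have "\<dots> = (Zf * Zg) * ennreal (3 * A + 2 * B)"
    using \<open>0 \<le> A\<close> \<open>0 \<le> B\<close> by (simp add: ennreal_plus ennreal_mult algebra_simps)
  also have "\<dots> \<le> (Zf * Zg) * ennreal C"
    using C by (intro mult_left_mono ennreal_leI) auto
  finally show ?thesis
    unfolding Z using Zf Zg
    by (auto simp: Zf_def Zg_def ennreal_zero_less_mult_iff ennreal_mult_less_top intro: divide_le_posI_ennreal)
qed

lemma moment_constants_le:
  fixes d m L R :: real
  assumes d: "1 \<le> d" and m: "0 < m" and mL: "m \<le> L"
  shows "3 * (18/5 * (R\<^sup>2 + (d + 2) / m)) + 2 * (9/5 * ((d + 2) / (1000 * (L / m) * L / 2)))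
    \<le> 36 * (R\<^sup>2 + d / m)"
proof -
  \<comment> \<open>Naming the quotients lets linarith treat them as atoms.\<close>
  define x y t where "x = (d + 2) / m" and "y = (d + 2) / (1000 * (L / m) * L / 2)" and "t = d / m"
  have "m * m \<le> L * L" "0 < L"
    using m mL by (auto intro: mult_mono)
  then have "y \<le> (d + 2) / (500 * m)"
    unfolding y_def using m d by (intro divide_left_mono) (auto simp: field_simps)
  also have "\<dots> \<le> 3 * t / 500"
    unfolding t_def using m d by (simp add: field_simps)
  finally have "y \<le> 3 * t / 500" .
  moreover have "x \<le> 3 * t" "0 \<le> t"
    unfolding x_def t_def using m d by (simp_all add: field_simps)
  ultimately show ?thesis
    unfolding x_def[symmetric] y_def[symmetric] t_def[symmetric]
    by (simp add: field_simps) (use zero_le_power2[of R] in linarith)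
qed

theorem lemma23:
  fixes U :: "'a::euclidean_space \<Rightarrow> real" and gradU :: "'a \<Rightarrow> 'a"
    and L m R :: real
  assumes deriv: "\<And>x. (U has_derivative (\<lambda>h. gradU x \<bullet> h)) (at x)"
    and cont: "continuous_on UNIV gradU"
    and Lpos: "L > 0"
    and lip: "\<And>x y. norm (gradU x - gradU y) \<le> L * norm (x - y)"
    and grad0: "gradU 0 = 0"
    and mpos: "m > 0" and Rpos: "R > 0"
    and diss: "\<And>x y. norm (x - y) > R \<Longrightarrow>
                 (gradU x - gradU y) \<bullet> (x - y) \<ge> m * (norm (x - y))\<^sup>2"
  shows "0 < (\<integral>\<^sup>+ z. ennreal (pstar_dens U L m z) \<partial>lborel)
       \<and> (\<integral>\<^sup>+ z. ennreal (pstar_dens U L m z) \<partial>lborel) < \<infinity>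
       \<and> (\<integral>\<^sup>+ z. ennreal (((norm (fst z))\<^sup>2 + (norm (fst z + snd z))\<^sup>2) * pstar_dens U L m z) \<partial>lborel)
           / (\<integral>\<^sup>+ z. ennreal (pstar_dens U L m z) \<partial>lborel)
         \<le> ennreal (36 * (R\<^sup>2 + real DIM('a) / m))"
proof -
  define a where "a = 1000 * (L / m) * L / 2"
  have "a > 0"
    using Lpos mpos by (simp add: a_def)
  have dens: "pstar_dens U L m = (\<lambda>z. exp (- U (fst z)) * exp (- (a * (norm (snd z))\<^sup>2)))"
    by (auto simp: pstar_dens_def a_def exp_diff exp_minus field_simps)
  have "continuous_on UNIV U"
    using deriv by (meson continuous_at_imp_continuous_on has_derivative_continuous)
  have "1 \<le> real DIM('a)"
    using DIM_positive[where 'a='a] by linarith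
  then have const: "3 * (18/5 * (R\<^sup>2 + (real DIM('a) + 2) / m)) + 2 * (9/5 * ((real DIM('a) + 2) / a))
      \<le> 36 * (R\<^sup>2 + real DIM('a) / m)"
    unfolding a_def using mpos dissipativity_le_Lipschitz[OF lip grad0 Rpos diss]
    by (rule moment_constants_le)
  have "(\<lambda>x. exp (- U x)) \<in> borel_measurable borel" "(\<lambda>u::'a. exp (- (a * (norm u)\<^sup>2))) \<in> borel_measurable borel"
    by (intro borel_measurable_continuous_onI continuous_intros \<open>continuous_on UNIV U\<close>)+
  moreover have "0 \<le> 18/5 * (R\<^sup>2 + (real DIM('a) + 2) / m)" "0 \<le> 9/5 * ((real DIM('a) + 2) / a)"
    using mpos \<open>a > 0\<close> by simp_all
  ultimately show ?thesis
    unfolding dens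
    by (rule pair_second_moment_ratio_le[OF _ _ exp_ge_zero exp_ge_zero _ _ const
          second_moment_le_of_dissipative[OF deriv grad0 mpos Rpos diss] second_moment_le_gaussian[OF \<open>a > 0\<close>]])
qed

end
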